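(* Let $B=(V,E)$ be a simple Bratteli diagram with $V_0=\{v^0\}$ and $V_k=\{v_1^k,\dots,v_{n(k)}^k\}$, and for $k\ge1$ let $h_j^k\ge1$ be the number of finite paths from $v^0$ to $v_j^k$. Then $\mathbb Q(K^0(V,E),[v^0])=\mathbb Z[v^0]$ if and only if $\gcd(h_1^k,\dots,h_{n(k)}^k)=1$ for all $k\ge1$.
   Context: A Bratteli diagram has levels $V_k$ (finite) and edges $E_k$ from $V_{k-1}$ to $V_k$, with incidence matrices $A_k$ ($|V_k|\times|V_{k-1}|$) counting edges; simple means some telescoping has strictly positive incidence matrices. $K^0(V,E)$ is the direct limit of $\mathbb Z^{V_0}\xrightarrow{A_1}\mathbb Z^{V_1}\xrightarrow{A_2}\cdots$ ordered by the images of the positive cones, with order unit $[v^0]$ the class of $1\in\mathbb Z^{V_0}$. $\mathbb Q(G,u)=\{g\in G:pg=mu\text{ for some nonzero }p\in\mathbb Z,\ m\in\mathbb Z\}$. *)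

theory Defs
  imports Main
begin

text \<open>A Bratteli diagram is encoded by the level sizes n k = |V_k| (vertices of level k
are 0..<n k) and the incidence data A k i j = number of edges from vertex j of V_(k-1)
to vertex i of V_k (k >= 1), i.e. A k is the |V_k| x |V_(k-1)| incidence matrix.\<close>

definition bratteli :: "(nat \<Rightarrow> nat) \<Rightarrow> (nat \<Rightarrow> nat \<Rightarrow> nat \<Rightarrow> nat) \<Rightarrow> bool" where
  "bratteli n A \<longleftrightarrow> n 0 = 1 \<and> (\<forall>k. n k \<ge> 1)
     \<and> (\<forall>k\<ge>1. \<forall>i<n k. \<exists>j<n (k - 1). A k i j > 0)
     \<and> (\<forall>k. \<forall>j<n k. \<exists>i<n (Suc k). A (Suc k) i j > 0)"

definition lvl_map :: "(nat \<Rightarrow> nat) \<Rightarrow> (nat \<Rightarrow> nat \<Rightarrow> nat \<Rightarrow> nat) \<Rightarrow> nat \<Rightarrow> (nat \<Rightarrow> int) \<Rightarrow> nat \<Rightarrow> int" where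
  "lvl_map n A k x = (\<lambda>i. if i < n k then (\<Sum>j<n (k - 1). int (A k i j) * x j) else 0)"

fun trans :: "(nat \<Rightarrow> nat) \<Rightarrow> (nat \<Rightarrow> nat \<Rightarrow> nat \<Rightarrow> nat) \<Rightarrow> nat \<Rightarrow> nat \<Rightarrow> (nat \<Rightarrow> int) \<Rightarrow> nat \<Rightarrow> int" where
  "trans n A k 0 x = x"
| "trans n A k (Suc d) x = lvl_map n A (k + Suc d) (trans n A k d x)"

definition unitvec :: "nat \<Rightarrow> nat \<Rightarrow> int" where
  "unitvec j = (\<lambda>i. if i = j then 1 else 0)"

text \<open>Simple: some telescoping 0 = m_0 < m_1 < ... has strictly positive incidence matrices.\<close>
definition simple_bratteli :: "(nat \<Rightarrow> nat) \<Rightarrow> (nat \<Rightarrow> nat \<Rightarrow> nat \<Rightarrow> nat) \<Rightarrow> bool" where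
  "simple_bratteli n A \<longleftrightarrow> bratteli n A \<and>
     (\<exists>m::nat \<Rightarrow> nat. strict_mono m \<and> m 0 = 0 \<and>
        (\<forall>t. \<forall>i<n (m (Suc t)). \<forall>j<n (m t).
             trans n A (m t) (m (Suc t) - m t) (unitvec j) i > 0))"

fun npaths :: "(nat \<Rightarrow> nat) \<Rightarrow> (nat \<Rightarrow> nat \<Rightarrow> nat \<Rightarrow> nat) \<Rightarrow> nat \<Rightarrow> nat \<Rightarrow> nat" where
  "npaths n A 0 j = (if j < n 0 then 1 else 0)"
| "npaths n A (Suc k) i = (if i < n (Suc k) then (\<Sum>j<n k. A (Suc k) i j * npaths n A k j) else 0)"

text \<open>The direct limit K^0(V,E): representatives (k,x) with x in Z^{V_k}, identified
when their images agree at some later level.\<close>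
definition K0_reps :: "(nat \<Rightarrow> nat) \<Rightarrow> (nat \<times> (nat \<Rightarrow> int)) set" where
  "K0_reps n = {(k, x). \<forall>i\<ge>n k. x i = 0}"

definition K0_rel :: "(nat \<Rightarrow> nat) \<Rightarrow> (nat \<Rightarrow> nat \<Rightarrow> nat \<Rightarrow> nat) \<Rightarrow> ((nat \<times> (nat \<Rightarrow> int)) \<times> (nat \<times> (nat \<Rightarrow> int))) set" where
  "K0_rel n A = {((k, x), (l, y)). (k, x) \<in> K0_reps n \<and> (l, y) \<in> K0_reps n \<and>
      (\<exists>m. k \<le> m \<and> l \<le> m \<and> trans n A k (m - k) x = trans n A l (m - l) y)}"

definition K0 :: "(nat \<Rightarrow> nat) \<Rightarrow> (nat \<Rightarrow> nat \<Rightarrow> nat \<Rightarrow> nat) \<Rightarrow> (nat \<times> (nat \<Rightarrow> int)) set set" where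
  "K0 n A = K0_reps n // K0_rel n A"

definition K0_add :: "(nat \<Rightarrow> nat) \<Rightarrow> (nat \<Rightarrow> nat \<Rightarrow> nat \<Rightarrow> nat) \<Rightarrow> (nat \<times> (nat \<Rightarrow> int)) set \<Rightarrow> (nat \<times> (nat \<Rightarrow> int)) set \<Rightarrow> (nat \<times> (nat \<Rightarrow> int)) set" where
  "K0_add n A g h = K0_rel n A `` {(m, \<lambda>i. trans n A k (m - k) x i + trans n A l (m - l) y i) | k x l y m.
       (k, x) \<in> g \<and> (l, y) \<in> h \<and> k \<le> m \<and> l \<le> m}"

definition K0_zmult :: "(nat \<Rightarrow> nat) \<Rightarrow> (nat \<Rightarrow> nat \<Rightarrow> nat \<Rightarrow> nat) \<Rightarrow> int \<Rightarrow> (nat \<times> (nat \<Rightarrow> int)) set \<Rightarrow> (nat \<times> (nat \<Rightarrow> int)) set" where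
  "K0_zmult n A p g = K0_rel n A `` ((\<lambda>(k, x). (k, \<lambda>i. p * x i)) ` g)"

definition K0_unit :: "(nat \<Rightarrow> nat) \<Rightarrow> (nat \<Rightarrow> nat \<Rightarrow> nat \<Rightarrow> nat) \<Rightarrow> (nat \<times> (nat \<Rightarrow> int)) set" where
  "K0_unit n A = K0_rel n A `` {(0, \<lambda>i. if i < n 0 then 1 else 0)}"

definition K0_Q :: "(nat \<Rightarrow> nat) \<Rightarrow> (nat \<Rightarrow> nat \<Rightarrow> nat \<Rightarrow> nat) \<Rightarrow> (nat \<times> (nat \<Rightarrow> int)) set set" where
  "K0_Q n A = {g \<in> K0 n A. \<exists>p m. p \<noteq> 0 \<and> K0_zmult n A p g = K0_zmult n A m (K0_unit n A)}"

definition K0_Zunit :: "(nat \<Rightarrow> nat) \<Rightarrow> (nat \<Rightarrow> nat \<Rightarrow> nat \<Rightarrow> nat) \<Rightarrow> (nat \<times> (nat \<Rightarrow> int)) set set" where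
  "K0_Zunit n A = {K0_zmult n A m (K0_unit n A) | m. True}"

end

theory Submission
  imports Defs
begin

text \<open>An element of K^0 is represented at some level k by a vector x. It lies in Z[v^0] iff x is
pushed at some later level M onto an integer multiple c h^M of the path-count vector h^M, and in
Q(K^0,[v^0]) iff some nonzero multiple p x is. If all gcds are 1, then p divides every c h^M_i and
hence c, so the second condition implies the first. Conversely, if d is the gcd of h^k, then the
class of h^k/d lies in Q(K^0,[v^0]), and since h^M has a positive entry it is an integer multiple
of [v^0] only if d = 1.\<close>

lemma trans_add: "trans n A k (a + b) x = trans n A (k + a) b (trans n A k a x)"
  by (induction b) (auto simp: add.assoc)

lemma trans_via: "k \<le> m \<Longrightarrow> m \<le> M \<Longrightarrow>
    trans n A k (M - k) x = trans n A m (M - m) (trans n A k (m - k) x)"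
  using trans_add[of n A k "m - k" "M - m" x] by simp

lemma trans_eq_mono:
  assumes "k \<le> m" "l \<le> m" "m \<le> M" "trans n A k (m - k) x = trans n A l (m - l) y"
  shows "trans n A k (M - k) x = trans n A l (M - l) y"
  using assms trans_via[of k m M n A x] trans_via[of l m M n A y] by simp

lemma trans_scale: "trans n A k d (\<lambda>i. c * x i) = (\<lambda>i. c * trans n A k d x i)"
proof (induction d)
  case (Suc d)
  then show ?case by (auto simp: lvl_map_def sum_distrib_left mult.left_commute)
qed simp

lemma K0_reps_scale: "(k, x) \<in> K0_reps n \<Longrightarrow> (k, \<lambda>i. c * x i) \<in> K0_reps n"
  by (auto simp: K0_reps_def)

lemma K0_rel_scale:
  "((k, x), (l, y)) \<in> K0_rel n A \<Longrightarrow> ((k, \<lambda>i. c * x i), (l, \<lambda>i. c * y i)) \<in> K0_rel n A"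
  by (auto simp: K0_rel_def K0_reps_def trans_scale)

lemma K0_rel_trans:
  assumes "((k, x), (l, y)) \<in> K0_rel n A" "((l, y), (j, z)) \<in> K0_rel n A"
  shows "((k, x), (j, z)) \<in> K0_rel n A"
proof -
  from assms obtain m1 m2
    where m1: "k \<le> m1" "l \<le> m1" "trans n A k (m1 - k) x = trans n A l (m1 - l) y"
      and m2: "l \<le> m2" "j \<le> m2" "trans n A l (m2 - l) y = trans n A j (m2 - j) z"
      and reps: "(k, x) \<in> K0_reps n" "(j, z) \<in> K0_reps n"
    unfolding K0_rel_def by auto
  define M where "M = max m1 m2"
  have "trans n A k (M - k) x = trans n A l (M - l) y"
    using trans_eq_mono[OF m1(1,2) _ m1(3)] by (simp add: M_def)
  also have "\<dots> = trans n A j (M - j) z"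
    using trans_eq_mono[OF m2(1,2) _ m2(3)] by (simp add: M_def)
  finally show ?thesis
    using reps m1 m2 unfolding K0_rel_def M_def by (auto intro!: exI[of _ "max m1 m2"])
qed

lemma equiv_K0_rel: "equiv (K0_reps n) (K0_rel n A)"
proof (rule equivI)
  show "K0_rel n A \<subseteq> K0_reps n \<times> K0_reps n"
    by (auto simp: K0_rel_def)
  show "refl_on (K0_reps n) (K0_rel n A)"
    unfolding refl_on_def K0_rel_def by auto
  show "sym (K0_rel n A)"
    by (rule symI) (auto simp: K0_rel_def)
  show "Relation.trans (K0_rel n A)"
    by (rule transI) (metis K0_rel_trans prod.collapse)
qed

lemma K0_class_eq_iff:
  "a \<in> K0_reps n \<Longrightarrow> b \<in> K0_reps n \<Longrightarrow>
    K0_rel n A `` {a} = K0_rel n A `` {b} \<longleftrightarrow> (a, b) \<in> K0_rel n A"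
  using eq_equiv_class_iff[OF equiv_K0_rel] by blast

lemma K0_zmult_class:
  assumes "(k, x) \<in> K0_reps n"
  shows "K0_zmult n A p (K0_rel n A `` {(k, x)}) = K0_rel n A `` {(k, \<lambda>i. p * x i)}"
proof
  show "K0_zmult n A p (K0_rel n A `` {(k, x)}) \<subseteq> K0_rel n A `` {(k, \<lambda>i. p * x i)}"
    unfolding K0_zmult_def by (auto dest: K0_rel_scale K0_rel_trans)
  have "((k, x), (k, x)) \<in> K0_rel n A"
    using assms by (auto simp: K0_rel_def)
  then show "K0_rel n A `` {(k, \<lambda>i. p * x i)} \<subseteq> K0_zmult n A p (K0_rel n A `` {(k, x)})"
    unfolding K0_zmult_def by force
qed

definition path_vec :: "(nat \<Rightarrow> nat) \<Rightarrow> (nat \<Rightarrow> nat \<Rightarrow> nat \<Rightarrow> nat) \<Rightarrow> nat \<Rightarrow> nat \<Rightarrow> int" where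
  "path_vec n A k = (\<lambda>i. int (npaths n A k i))"

lemma npaths_eq_0: "\<not> i < n k \<Longrightarrow> npaths n A k i = 0"
  by (cases k) auto

lemma npaths_pos: "bratteli n A \<Longrightarrow> i < n k \<Longrightarrow> 0 < npaths n A k i"
proof (induction k arbitrary: i)
  case (Suc k)
  then obtain j where j: "j < n k" "0 < A (Suc k) i j"
    unfolding bratteli_def by (metis diff_Suc_1 le_add1 plus_1_eq_Suc)
  have "0 < A (Suc k) i j * npaths n A k j"
    using j Suc.IH[OF Suc.prems(1)] by simp
  also have "\<dots> \<le> (\<Sum>j<n k. A (Suc k) i j * npaths n A k j)"
    using j by (intro member_le_sum) auto
  finally show ?case using Suc.prems by simp
qed simp

lemma trans_path_vec: "trans n A k d (path_vec n A k) = path_vec n A (k + d)"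
  by (induction d) (auto simp: path_vec_def lvl_map_def)

lemma K0_reps_path_vec: "(k, \<lambda>i. c * path_vec n A k i) \<in> K0_reps n"
  by (simp add: K0_reps_def path_vec_def npaths_eq_0)

lemma K0_zmult_unit:
  "K0_zmult n A c (K0_unit n A) = K0_rel n A `` {(0, \<lambda>i. c * path_vec n A 0 i)}"
proof -
  have "(\<lambda>i. if i < n 0 then 1 else 0) = path_vec n A 0"
    by (auto simp: path_vec_def)
  then show ?thesis
    using K0_zmult_class[OF K0_reps_path_vec[of 0 1]] by (simp add: K0_unit_def)
qed

lemma K0_rel_unit_multiple_iff:
  assumes "(k, x) \<in> K0_reps n"
  shows "((k, x), (0, \<lambda>i. c * path_vec n A 0 i)) \<in> K0_rel n A \<longleftrightarrow>
    (\<exists>M\<ge>k. trans n A k (M - k) x = (\<lambda>i. c * path_vec n A M i))"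
  using assms K0_reps_path_vec[of 0 c n A]
  by (simp add: K0_rel_def trans_scale trans_path_vec)

lemma K0_class_in_Zunit_iff:
  assumes "(k, x) \<in> K0_reps n"
  shows "K0_rel n A `` {(k, x)} \<in> K0_Zunit n A \<longleftrightarrow>
    (\<exists>c. \<exists>M\<ge>k. trans n A k (M - k) x = (\<lambda>i. c * path_vec n A M i))"
  using K0_class_eq_iff[OF assms K0_reps_path_vec] K0_rel_unit_multiple_iff[OF assms]
  by (auto simp: K0_Zunit_def K0_zmult_unit)

lemma K0_class_in_Q_iff:
  assumes "(k, x) \<in> K0_reps n"
  shows "K0_rel n A `` {(k, x)} \<in> K0_Q n A \<longleftrightarrow>
    (\<exists>p c. p \<noteq> 0 \<and> (\<exists>M\<ge>k. (\<lambda>i. p * trans n A k (M - k) x i) = (\<lambda>i. c * path_vec n A M i)))"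
proof -
  have "K0_rel n A `` {(k, x)} \<in> K0 n A"
    unfolding K0_def using assms by (rule quotientI)
  then show ?thesis
    using K0_class_eq_iff[OF K0_reps_scale[OF assms] K0_reps_path_vec]
      K0_rel_unit_multiple_iff[OF K0_reps_scale[OF assms]]
    by (simp add: K0_Q_def K0_zmult_class[OF assms] K0_zmult_unit trans_scale)
qed

lemma K0_Zunit_subset_Q: "K0_Zunit n A \<subseteq> K0_Q n A"
proof
  fix g assume g: "g \<in> K0_Zunit n A"
  then obtain c where g_eq: "g = K0_rel n A `` {(0, \<lambda>i. c * path_vec n A 0 i)}"
    by (auto simp: K0_Zunit_def K0_zmult_unit)
  then obtain c' M where "trans n A 0 M (\<lambda>i. c * path_vec n A 0 i) = (\<lambda>i. c' * path_vec n A M i)"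
    using g K0_class_in_Zunit_iff[OF K0_reps_path_vec] by auto
  then show "g \<in> K0_Q n A"
    unfolding g_eq K0_class_in_Q_iff[OF K0_reps_path_vec]
    by (intro exI[of _ 1] exI[of _ c'] conjI exI[of _ M]) simp_all
qed

lemma dvd_if_dvd_mult_all_Gcd_eq_1:
  fixes p c :: int
  assumes "Gcd (f ` S) = (1::nat)" "\<forall>i\<in>S. p dvd c * int (f i)"
  shows "p dvd c"
proof -
  have "\<forall>i\<in>S. nat \<bar>p\<bar> dvd nat \<bar>c\<bar> * f i"
  proof
    fix i assume "i \<in> S"
    then have "\<bar>p\<bar> dvd \<bar>c * int (f i)\<bar>"
      using assms(2) by simp
    then have "int (nat \<bar>p\<bar>) dvd int (nat \<bar>c\<bar> * f i)"
      by (simp add: abs_mult)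
    then show "nat \<bar>p\<bar> dvd nat \<bar>c\<bar> * f i"
      by (simp only: of_nat_dvd_iff)
  qed
  then have "nat \<bar>p\<bar> dvd Gcd ((*) (nat \<bar>c\<bar>) ` f ` S)"
    by (intro Gcd_greatest) blast
  also have "\<dots> = nat \<bar>c\<bar>"
    using Gcd_mult[of "nat \<bar>c\<bar>" "f ` S"] assms(1) by simp
  finally show ?thesis by simp
qed

lemma K0_Q_subset_Zunit:
  assumes "\<And>M. Gcd (npaths n A M ` {..<n M}) = 1"
  shows "K0_Q n A \<subseteq> K0_Zunit n A"
proof
  fix g assume g: "g \<in> K0_Q n A"
  then have "g \<in> K0 n A"
    by (simp add: K0_Q_def)
  then obtain k x where x: "(k, x) \<in> K0_reps n" and g_eq: "g = K0_rel n A `` {(k, x)}"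
    unfolding K0_def by (auto elim!: quotientE)
  obtain p c M where "p \<noteq> 0" "k \<le> M"
    and pushed: "(\<lambda>i. p * trans n A k (M - k) x i) = (\<lambda>i. c * path_vec n A M i)"
    using g unfolding g_eq K0_class_in_Q_iff[OF x] by blast
  have "p dvd c * int (npaths n A M i)" for i
    using fun_cong[OF pushed, of i] unfolding path_vec_def by (metis dvd_triv_left)
  then have "p dvd c"
    using dvd_if_dvd_mult_all_Gcd_eq_1[OF assms] by blast
  then obtain q where q: "c = p * q" ..
  have "trans n A k (M - k) x = (\<lambda>i. q * path_vec n A M i)"
  proof
    fix i show "trans n A k (M - k) x i = q * path_vec n A M i"
      using fun_cong[OF pushed, of i] \<open>p \<noteq> 0\<close> q by simp
  qed
  then show "g \<in> K0_Zunit n A"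
    using K0_class_in_Zunit_iff[OF x] \<open>k \<le> M\<close> g_eq by blast
qed

lemma Gcd_npaths_eq_1_if_Q_subset_Zunit:
  assumes br: "bratteli n A" and Q: "K0_Q n A \<subseteq> K0_Zunit n A"
  shows "Gcd (npaths n A k ` {..<n k}) = 1"
proof -
  define d where "d = Gcd (npaths n A k ` {..<n k})"
  have d_dvd: "d dvd npaths n A k i" for i
    by (cases "i < n k") (auto simp: d_def npaths_eq_0)
  define x where "x = (\<lambda>i. int (npaths n A k i div d))"
  have dx: "(\<lambda>i. int d * x i) = path_vec n A k"
    using d_dvd by (auto simp: x_def path_vec_def simp flip: of_nat_mult)
  have x: "(k, x) \<in> K0_reps n"
    by (simp add: K0_reps_def x_def npaths_eq_0)
  have n_pos: "0 < n m" for m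
    using br unfolding bratteli_def by (simp add: Suc_le_eq)
  have "d \<noteq> 0"
    using d_dvd[of 0] npaths_pos[OF br n_pos] by (metis dvd_0_left_iff less_irrefl)
  then have "K0_rel n A `` {(k, x)} \<in> K0_Q n A"
    unfolding K0_class_in_Q_iff[OF x]
    by (intro exI[of _ "int d"] exI[of _ 1] conjI exI[of _ k]) (simp_all add: dx)
  with Q obtain c M where "k \<le> M" and pushed: "trans n A k (M - k) x = (\<lambda>i. c * path_vec n A M i)"
    using K0_class_in_Zunit_iff[OF x] by blast
  have "path_vec n A M = trans n A k (M - k) (\<lambda>i. int d * x i)"
    using trans_path_vec[of n A k "M - k"] \<open>k \<le> M\<close> dx by simp
  also have "\<dots> = (\<lambda>i. int d * c * path_vec n A M i)"
    by (simp add: trans_scale pushed mult.assoc)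
  finally have "path_vec n A M 0 = int d * c * path_vec n A M 0"
    by (rule fun_cong)
  moreover have "0 < path_vec n A M 0"
    using npaths_pos[OF br n_pos] by (simp add: path_vec_def)
  ultimately have "int d * c = 1" by simp
  then show ?thesis
    using zmult_eq_1_iff[of "int d" c] by (simp add: d_def)
qed

theorem mainTheorem18:
  fixes n :: "nat \<Rightarrow> nat" and A :: "nat \<Rightarrow> nat \<Rightarrow> nat \<Rightarrow> nat"
  assumes "simple_bratteli n A"
  shows "K0_Q n A = K0_Zunit n A \<longleftrightarrow>
         (\<forall>k\<ge>1. Gcd (npaths n A k ` {..<n k}) = 1)"
proof
  have br: "bratteli n A"
    using assms by (simp add: simple_bratteli_def)
  show "K0_Q n A = K0_Zunit n A \<Longrightarrow> \<forall>k\<ge>1. Gcd (npaths n A k ` {..<n k}) = 1"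
    using Gcd_npaths_eq_1_if_Q_subset_Zunit[OF br] by simp
  assume gcds: "\<forall>k\<ge>1. Gcd (npaths n A k ` {..<n k}) = 1"
  have "Gcd (npaths n A M ` {..<n M}) = 1" for M
  proof (cases M)
    case 0
    then show ?thesis using br by (simp add: bratteli_def lessThan_Suc)
  next
    case (Suc m)
    then show ?thesis using gcds by (simp del: npaths.simps)
  qed
  then show "K0_Q n A = K0_Zunit n A"
    using K0_Q_subset_Zunit K0_Zunit_subset_Q by (metis subset_antisym)
qed

end
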